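(* Let $R$ be a $*$-ring, let $a\in R$, and let $n\geq 3$ be an integer. Then $a$ is dual core invertible if and only if there exists $c\in R$ such that $a^{\circ}=cR$ and $v=a^{n}a^{*}+cc^{*}$ is invertible. In this case $$a_{\mathrm{core}}=a^{*}v^{-1}a^{n-1}.$$
   Context: A $*$-ring is an associative ring with identity $1$ and an involution $*$, i.e. $(a^* )^*=a$, $(ab)^*=b^*a^*$ and $(a+b)^*=a^*+b^*$. For $a\in R$: $a^{\circ}=\{x\in R : ax=0\}$ and $cR=\{cx : x\in R\}$. An element $a$ is dual core invertible if there is $x\in R$ with $(xa)^*=xa$, $x^2a=x$ and $a^2x=a$. Such an $x$ is unique and denoted $a_{\mathrm{core}}$. "Invertible" means having a two-sided inverse in $R$. *)

theory Defs
  imports Main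
begin

definition is_involution :: "('a::ring_1 \<Rightarrow> 'a) \<Rightarrow> bool" where
  "is_involution s \<longleftrightarrow>
     (\<forall>a. s (s a) = a) \<and> (\<forall>a b. s (a * b) = s b * s a) \<and> (\<forall>a b. s (a + b) = s a + s b)"

definition right_ann :: "'a::ring_1 \<Rightarrow> 'a set" where
  "right_ann a = {x. a * x = 0}"

definition right_ideal_gen :: "'a::ring_1 \<Rightarrow> 'a set" where
  "right_ideal_gen c = {c * x | x. True}"

definition is_invertible :: "'a::ring_1 \<Rightarrow> bool" where
  "is_invertible v \<longleftrightarrow> (\<exists>y. v * y = 1 \<and> y * v = 1)"

definition ring_inv :: "'a::ring_1 \<Rightarrow> 'a" where
  "ring_inv v = (THE y. v * y = 1 \<and> y * v = 1)"

definition is_dual_core_inverse :: "('a::ring_1 \<Rightarrow> 'a) \<Rightarrow> 'a \<Rightarrow> 'a \<Rightarrow> bool" where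
  "is_dual_core_inverse s a x \<longleftrightarrow> s (x * a) = x * a \<and> x * x * a = x \<and> a * a * x = a"

definition dual_core_invertible :: "('a::ring_1 \<Rightarrow> 'a) \<Rightarrow> 'a \<Rightarrow> bool" where
  "dual_core_invertible s a \<longleftrightarrow> (\<exists>x. is_dual_core_inverse s a x)"

definition dual_core_inv :: "('a::ring_1 \<Rightarrow> 'a) \<Rightarrow> 'a \<Rightarrow> 'a" where
  "dual_core_inv s a = (THE x. is_dual_core_inverse s a x)"

end

theory Submission
  imports Defs
begin

text \<open>
  If \<open>x\<close> is a dual core inverse of \<open>a\<close>, then \<open>p = x a\<close> is a selfadjoint idempotent,
  \<open>a\<degree> = (1 - p) R\<close>, and \<open>a\<^sup>n a\<^sup>* + (1 - p)\<close> has the explicit two-sided inverse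
  \<open>x\<^sup>* x\<^sup>n + (1 - e\<^sup>*) (1 - e)\<close> with \<open>e = a x\<close>.

  Conversely, only \<open>a c = 0\<close> is needed of \<open>c\<close>. Let \<open>w\<close> invert \<open>v = a\<^sup>n a\<^sup>* + c c\<^sup>*\<close>.
  Applying the involution to \<open>w v = 1\<close> gives \<open>a = a\<^sup>2 (a\<^sup>*)\<^sup>n w\<^sup>*\<close>, and for \<open>n \<ge> 3\<close> this
  yields \<open>a (a u) = 0 \<Longrightarrow> a u = 0\<close>, so powers of \<open>a\<close> can be cancelled on the left.
  Hence \<open>y = a\<^sup>* w a\<^sup>n\<^sup>-\<^sup>1\<close> satisfies \<open>a\<^sup>2 y = a\<close> and \<open>y\<^sup>2 a = y\<close>, and \<open>y a = a\<^sup>* w a\<^sup>n\<close>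
  is selfadjoint because it fixes \<open>a\<^sup>*\<close> from the left.
\<close>

lemma ring_inv_eqI:
  fixes v w :: "'a::ring_1"
  assumes "v * w = 1" and "w * v = 1"
  shows "ring_inv v = w"
  unfolding ring_inv_def
proof (rule the_equality)
  show "v * w = 1 \<and> w * v = 1" using assms by blast
next
  fix y assume "v * y = 1 \<and> y * v = 1"
  then have "y = (w * v) * y" using assms(2) by simp
  also have "\<dots> = w" using \<open>v * y = 1 \<and> y * v = 1\<close> by (simp add: mult.assoc)
  finally show "y = w" .
qed

lemma power_Suc_mult_power_Suc:
  fixes u v :: "'a::ring_1"
  assumes "u * u * v = u"
  shows "u ^ Suc k * v ^ Suc k = u * v"
proof (induction k)
  case 0
  show ?case by simp
next
  case (Suc k)
  have "u ^ Suc (Suc k) * v ^ Suc (Suc k) = u * (u ^ Suc k * v ^ Suc k) * v"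
    by (simp only: power_Suc[of u "Suc k"] power_Suc2[of v "Suc k"] mult.assoc)
  also have "\<dots> = u * v" using Suc.IH assms by (simp add: mult.assoc)
  finally show ?case .
qed

lemma right_ann_eq_right_ideal_gen_of_inner_inverse:
  fixes a x :: "'a::ring_1"
  assumes "a * x * a = a"
  shows "right_ann a = right_ideal_gen (1 - x * a)"
proof (intro set_eqI iffI)
  fix y assume "y \<in> right_ann a"
  then have "y = (1 - x * a) * y" by (simp add: right_ann_def algebra_simps mult.assoc)
  then show "y \<in> right_ideal_gen (1 - x * a)" unfolding right_ideal_gen_def by blast
next
  fix y assume "y \<in> right_ideal_gen (1 - x * a)"
  then obtain t where "y = (1 - x * a) * t" unfolding right_ideal_gen_def by blast
  moreover have "a * (1 - x * a) = 0" using assms by (simp add: algebra_simps mult.assoc)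
  ultimately show "y \<in> right_ann a" by (simp add: right_ann_def mult.assoc[symmetric])
qed

lemma mult_eq_zero_of_right_ann_eq_right_ideal_gen:
  fixes a c :: "'a::ring_1"
  assumes "right_ann a = right_ideal_gen c"
  shows "a * c = 0"
proof -
  have "c \<in> right_ideal_gen c" unfolding right_ideal_gen_def by (auto intro: exI[of _ 1])
  then have "c \<in> right_ann a" using assms by simp
  then show ?thesis by (simp add: right_ann_def)
qed

lemma mult_eq_zero_of_power_mult_eq_zero:
  fixes a u :: "'a::ring_1"
  assumes square: "\<And>u. a * (a * u) = 0 \<Longrightarrow> a * u = 0"
    and "a ^ Suc j * u = 0"
  shows "a * u = 0"
  using assms(2)
proof (induction j arbitrary: u)
  case 0
  then show ?case by simp
next
  case (Suc j)
  then have "a * (a * u) = 0" by (simp only: power_Suc2[of a "Suc j"] mult.assoc)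
  then show ?case by (rule square)
qed

locale involution =
  fixes s :: "'a::ring_1 \<Rightarrow> 'a"
  assumes is_involution: "is_involution s"
begin

lemma invol_invol [simp]: "s (s a) = a"
  using is_involution unfolding is_involution_def by blast

lemma invol_mult: "s (a * b) = s b * s a"
  using is_involution unfolding is_involution_def by blast

lemma invol_add: "s (a + b) = s a + s b"
  using is_involution unfolding is_involution_def by blast

lemma invol_0 [simp]: "s 0 = 0"
  using invol_add[of 0 0] by simp

lemma invol_1 [simp]: "s 1 = 1"
  using invol_mult[of "s 1" 1] by simp

lemma invol_diff: "s (a - b) = s a - s b"
  using invol_add[of "a - b" b] by (simp add: eq_diff_eq)

lemma invol_power: "s (a ^ k) = s a ^ k"
  by (induction k) (simp_all add: invol_mult power_commutes)

lemma selfadjoint_of_mult_adjoint: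
  assumes "t * s t = s t"
  shows "s t = t"
proof -
  have "t = s (t * s t)" using assms by simp
  also have "\<dots> = t * s t" by (simp add: invol_mult)
  finally show ?thesis using assms by simp
qed

lemma dual_core_inverseD:
  assumes "is_dual_core_inverse s a x"
  shows "s (x * a) = x * a" and "x * x * a = x" and "a * a * x = a"
    and "a * x * a = a" and "x * a * x = x"
proof -
  show "s (x * a) = x * a" and left: "x * x * a = x" and right: "a * a * x = a"
    using assms unfolding is_dual_core_inverse_def by auto
  have "a * x * a = (a * a * x) * x * a" by (simp only: right)
  also have "\<dots> = a * a * (x * x * a)" by (simp only: mult.assoc)
  finally show "a * x * a = a" by (simp only: left right)
  have "x * a * x = (x * x * a) * a * x" by (simp only: left)
  also have "\<dots> = x * x * (a * a * x)" by (simp only: mult.assoc)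
  finally show "x * a * x = x" by (simp only: left right)
qed

lemma dual_core_inverse_unique:
  assumes x: "is_dual_core_inverse s a x" and y: "is_dual_core_inverse s a y"
  shows "x = y"
proof -
  note x = dual_core_inverseD[OF x] and y = dual_core_inverseD[OF y]
  have "x * a = s (x * a * (y * a))" using y(4) x(1) by (simp add: mult.assoc)
  also have "\<dots> = y * a * (x * a)" using x(1) y(1) by (simp add: invol_mult)
  also have "\<dots> = y * a" using x(4) by (simp add: mult.assoc)
  finally have same_projection: "x * a = y * a" .
  have "a * (x - y) = a * (x * x * a) * a * (x - y)" using x(2,4) by (simp only:)
  also have "\<dots> = a * x * x * (a * a * (x - y))" by (simp add: mult.assoc)
  also have "\<dots> = 0" using x(3) y(3) by (simp add: right_diff_distrib)
  finally have "a * (x - y) = 0" .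
  have "x - y = x * a * x - y * a * y" by (simp only: x(5) y(5))
  also have "\<dots> = x * a * (x - y)" by (simp only: same_projection right_diff_distrib)
  also have "\<dots> = 0" using \<open>a * (x - y) = 0\<close> by (simp add: mult.assoc)
  finally show ?thesis by simp
qed

lemma dual_core_inv_eq:
  assumes "is_dual_core_inverse s a x"
  shows "dual_core_inv s a = x"
  unfolding dual_core_inv_def
proof (rule the_equality)
  show "is_dual_core_inverse s a x" by (rule assms)
next
  fix y assume "is_dual_core_inverse s a y"
  then show "y = x" using assms by (rule dual_core_inverse_unique)
qed

lemma dual_core_inverse_projections:
  assumes "is_dual_core_inverse s a x"
  shows "x * a * (x * a) = x * a" and "x * a * (a * x) = x * a" and "a * x * (x * a) = a * x"
    and "x * a * s (a * x) = s (a * x)" and "s (a * x) * (x * a) = x * a"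
proof -
  note dci = dual_core_inverseD[OF assms]
  show "x * a * (x * a) = x * a" by (simp only: mult.assoc[symmetric] dci(5))
  have "x * a * (a * x) = x * (a * a * x)" by (simp only: mult.assoc)
  then show pe: "x * a * (a * x) = x * a" by (simp only: dci(3))
  have "a * x * (x * a) = a * (x * x * a)" by (simp only: mult.assoc)
  then show ep: "a * x * (x * a) = a * x" by (simp only: dci(2))
  have "s (a * x) = s (a * x * (x * a))" by (simp only: ep)
  also have "\<dots> = s (x * a) * s (a * x)" by (rule invol_mult)
  finally show "x * a * s (a * x) = s (a * x)" unfolding dci(1) by (rule sym)
  have "x * a = s (x * a * (a * x))" by (simp only: pe dci(1))
  also have "\<dots> = s (a * x) * s (x * a)" by (rule invol_mult)
  finally show "s (a * x) * (x * a) = x * a" unfolding dci(1) by (rule sym)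
qed

context
  fixes a x :: 'a and m :: nat
  assumes dci: "is_dual_core_inverse s a x"
begin

lemma dual_core_inverse_complement_square: "(1 - x * a) * s (1 - x * a) = 1 - x * a"
proof -
  have "(1 - x * a) * (1 - x * a) = 1 - x * a"
    using dual_core_inverse_projections(1)[OF dci] by (simp add: algebra_simps)
  then show ?thesis using dual_core_inverseD(1)[OF dci] by (simp add: invol_diff)
qed

lemma dual_core_inverse_right_inverse:
  "(a ^ Suc m * s a + (1 - x * a)) * (s x * x ^ Suc m + (1 - s (a * x)) * (1 - a * x)) = 1"
proof -
  note d = dual_core_inverseD[OF dci] and proj = dual_core_inverse_projections[OF dci]
  define p e q where "p = x * a" and "e = a * x" and "q = s (a * x)"
  define A B where "A = a ^ Suc m * s a" and "B = s x * x ^ Suc m"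
  have a_p: "a ^ Suc m * (x * a) = a ^ Suc m"
    by (simp only: power_Suc2 mult.assoc d(4)[unfolded mult.assoc])
  have "A * B = a ^ Suc m * s (x * a) * x ^ Suc m" by (simp only: A_def B_def invol_mult mult.assoc)
  also have "\<dots> = a ^ Suc m * x ^ Suc m" by (simp only: d(1) a_p)
  also have "\<dots> = e" using power_Suc_mult_power_Suc[OF d(3)] by (simp add: e_def)
  finally have AB: "A * B = e" .
  have "s a * q = s (a * x * a)" by (simp only: q_def invol_mult)
  then have "s a * q = s a" by (simp only: d(4))
  then have "s a * (1 - q) = 0" by (simp add: algebra_simps)
  moreover have "A * ((1 - q) * (1 - e)) = a ^ Suc m * (s a * (1 - q)) * (1 - e)"
    by (simp only: A_def mult.assoc)
  ultimately have AQ: "A * ((1 - q) * (1 - e)) = 0" by simp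
  have "s x = s (x * (x * a))" using d(2) by (simp only: mult.assoc)
  also have "\<dots> = s (x * a) * s x" by (rule invol_mult)
  finally have "p * s x = s x" unfolding p_def d(1) by (rule sym)
  then have "(1 - p) * s x = 0" by (simp add: algebra_simps)
  then have PB: "(1 - p) * B = 0" by (simp only: B_def mult.assoc[symmetric] mult_zero_left)
  have "(1 - p) * (1 - q) = 1 - p" using proj(4) unfolding p_def q_def by (simp add: algebra_simps)
  moreover have "(1 - p) * (1 - e) = 1 - e" using proj(2) unfolding p_def e_def by (simp add: algebra_simps)
  ultimately have PQ: "(1 - p) * ((1 - q) * (1 - e)) = 1 - e" by (simp only: mult.assoc[symmetric])
  have "(A + (1 - p)) * (B + (1 - q) * (1 - e))
      = A * B + A * ((1 - q) * (1 - e)) + (1 - p) * B + (1 - p) * ((1 - q) * (1 - e))"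
    by (simp only: distrib_left distrib_right add_ac)
  also have "\<dots> = 1" using AB AQ PB PQ by simp
  finally show ?thesis unfolding A_def B_def p_def e_def q_def .
qed

lemma dual_core_inverse_left_inverse:
  "(s x * x ^ Suc m + (1 - s (a * x)) * (1 - a * x)) * (a ^ Suc m * s a + (1 - x * a)) = 1"
proof -
  note d = dual_core_inverseD[OF dci] and proj = dual_core_inverse_projections[OF dci]
  define p e q where "p = x * a" and "e = a * x" and "q = s (a * x)"
  define A B where "A = a ^ Suc m * s a" and "B = s x * x ^ Suc m"
  have "s a = s (a * (x * a))" using d(4) by (simp only: mult.assoc)
  also have "\<dots> = s (x * a) * s a" by (rule invol_mult)
  finally have p_sa: "p * s a = s a" unfolding d(1) p_def by (rule sym)
  have "B * A = s x * (x ^ Suc m * a ^ Suc m) * s a" by (simp only: A_def B_def mult.assoc)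
  also have "\<dots> = s x * (p * s a)"
    by (simp only: power_Suc_mult_power_Suc[OF d(2)] p_def mult.assoc)
  also have "\<dots> = q" by (simp only: p_sa q_def invol_mult)
  finally have BA: "B * A = q" .
  have "x ^ Suc m * p = x ^ Suc m"
    by (simp only: p_def power_Suc2 mult.assoc d(2)[unfolded mult.assoc])
  then have "x ^ Suc m * (1 - p) = 0" by (simp add: algebra_simps)
  then have BP: "B * (1 - p) = 0" by (simp only: B_def mult.assoc mult_zero_right)
  have "e * a ^ Suc m = a ^ Suc m"
    by (simp only: e_def power_Suc mult.assoc[symmetric] d(4))
  then have "(1 - e) * a ^ Suc m = 0" by (simp add: algebra_simps)
  moreover have "(1 - q) * (1 - e) * A = (1 - q) * ((1 - e) * a ^ Suc m) * s a"
    by (simp only: A_def mult.assoc)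
  ultimately have QA: "(1 - q) * (1 - e) * A = 0" by simp
  have "(1 - e) * (1 - p) = 1 - p" using proj(3) unfolding p_def e_def by (simp add: algebra_simps)
  moreover have "(1 - q) * (1 - p) = 1 - q" using proj(5) unfolding p_def q_def by (simp add: algebra_simps)
  ultimately have QP: "(1 - q) * (1 - e) * (1 - p) = 1 - q" by (simp only: mult.assoc)
  have "(B + (1 - q) * (1 - e)) * (A + (1 - p))
      = B * A + B * (1 - p) + (1 - q) * (1 - e) * A + (1 - q) * (1 - e) * (1 - p)"
    by (simp only: distrib_left distrib_right add_ac)
  also have "\<dots> = 1" using BA BP QA QP by simp
  finally show ?thesis unfolding A_def B_def p_def e_def q_def .
qed

end

lemma dual_core_inverse_imp_invertible:
  assumes "is_dual_core_inverse s a x"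
  shows "is_invertible (a ^ Suc m * s a + (1 - x * a) * s (1 - x * a))"
  unfolding is_invertible_def dual_core_inverse_complement_square[OF assms]
  using dual_core_inverse_right_inverse[OF assms] dual_core_inverse_left_inverse[OF assms] by blast

context
  fixes a c w :: 'a and n :: nat
  assumes annihilates: "a * c = 0" and n_ge_3: "3 \<le> n"
    and right_inverse: "(a ^ n * s a + c * s c) * w = 1"
    and left_inverse: "w * (a ^ n * s a + c * s c) = 1"
begin

lemma square_mult_eq_zero_cancel:
  assumes "a * (a * u) = 0"
  shows "a * u = 0"
proof -
  have "n = Suc (Suc (Suc (n - 3)))" using n_ge_3 by arith
  then obtain m where n: "n = Suc (Suc (Suc m))" by blast
  have "1 = s (w * (a ^ n * s a + c * s c))" using left_inverse by simp
  also have "\<dots> = (a * s a ^ n + c * s c) * s w" by (simp add: invol_add invol_mult invol_power)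
  finally have adjoint_inverse: "(a * s a ^ n + c * s c) * s w = 1" by (rule sym)
  have "a = a * ((a * s a ^ n + c * s c) * s w)" using adjoint_inverse by simp
  also have "\<dots> = a * (a * (s a ^ n * s w)) + a * c * (s c * s w)" by (simp add: algebra_simps)
  also have "\<dots> = a * (a * (s a ^ n * s w))" using annihilates by simp
  finally have a_eq: "a * (a * (s a ^ n * s w)) = a" by (rule sym)
  define q k where "q = s a ^ n * (s w * u)" and "k = s a ^ Suc (Suc m) * (s w * u)"
  have "a * u = a * (a * (s a ^ n * s w)) * u" by (simp only: a_eq)
  then have "a * u = a * (a * q)" by (simp only: q_def mult.assoc)
  then have "a ^ n * q = 0"
    using assms by (simp only: n power_Suc2 mult.assoc mult_zero_right)
  have "a ^ Suc (Suc m) * c = 0" by (simp only: power_Suc2 mult.assoc annihilates mult_zero_right)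
  then have "s c * s a ^ Suc (Suc m) = 0" by (simp only: invol_mult[symmetric] invol_power[symmetric] invol_0)
  then have "s c * k = 0" by (simp only: k_def mult.assoc[symmetric] mult_zero_left)
  \<comment> \<open>\<open>k\<close> is chosen with \<open>a\<^sup>* k = q\<close> and \<open>c\<^sup>* k = 0\<close>, so \<open>v k = a\<^sup>n q = 0\<close> and hence \<open>k = 0\<close>.\<close>
  moreover have "s a * k = q" by (simp only: q_def k_def n power_Suc mult.assoc)
  ultimately have "(a ^ n * s a + c * s c) * k = 0"
    using \<open>a ^ n * q = 0\<close> by (simp add: distrib_right mult.assoc)
  then have "k = 0" using left_inverse by (metis mult.assoc mult_1_left mult_zero_right)
  then show ?thesis using \<open>s a * k = q\<close> \<open>a * u = a * (a * q)\<close> by simp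
qed

lemma power_mult_eq_zero_cancel:
  assumes "a ^ Suc j * u = 0"
  shows "a * u = 0"
  using square_mult_eq_zero_cancel assms by (rule mult_eq_zero_of_power_mult_eq_zero)

lemma power_Suc_mult_adjoint_inverse: "a ^ Suc n * (s a * w) = a"
proof -
  have "a = a * ((a ^ n * s a + c * s c) * w)" using right_inverse by simp
  also have "\<dots> = a * (a ^ n * (s a * w)) + a * c * (s c * w)" by (simp add: algebra_simps)
  also have "\<dots> = a ^ Suc n * (s a * w)" using annihilates by (simp add: mult.assoc)
  finally show ?thesis by (rule sym)
qed

lemma core_formula_right: "a * a * (s a * w * a ^ (n - 1)) = a"
proof -
  have n: "Suc (n - 1) = n" using n_ge_3 by arith
  have "a ^ n * (a * (s a * w * a ^ (n - 1))) = a ^ Suc n * (s a * w) * a ^ (n - 1)"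
    by (simp only: power_Suc2 mult.assoc)
  also have "\<dots> = a ^ n" by (simp only: power_Suc_mult_adjoint_inverse power_Suc[symmetric] n)
  finally have "a ^ Suc (n - 1) * (a * (s a * w * a ^ (n - 1)) - 1) = 0"
    by (simp only: n right_diff_distrib mult_1_right diff_self)
  then have "a * (a * (s a * w * a ^ (n - 1)) - 1) = 0" by (rule power_mult_eq_zero_cancel)
  then show ?thesis by (simp add: right_diff_distrib mult.assoc)
qed

lemma core_formula_inner: "a * (s a * w * a ^ (n - 1)) * a = a"
proof -
  have "a * (a * ((s a * w * a ^ (n - 1)) * a - 1)) = a * a * (s a * w * a ^ (n - 1)) * a - a * a"
    by (simp add: right_diff_distrib mult.assoc)
  also have "\<dots> = 0" by (simp only: core_formula_right diff_self)
  finally have "a * ((s a * w * a ^ (n - 1)) * a - 1) = 0" by (rule square_mult_eq_zero_cancel)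
  then show ?thesis by (simp add: right_diff_distrib mult.assoc)
qed

lemma core_formula_left:
  "s a * w * a ^ (n - 1) * (s a * w * a ^ (n - 1)) * a = s a * w * a ^ (n - 1)"
proof -
  have n: "n - 1 = Suc (n - 2)" using n_ge_3 by arith
  have "a ^ (n - 1) * ((s a * w * a ^ (n - 1)) * a) = a ^ (n - 2) * (a * (s a * w * a ^ (n - 1)) * a)"
    by (simp only: n power_Suc2 mult.assoc)
  also have "\<dots> = a ^ (n - 1)" by (simp only: core_formula_inner) (simp only: n power_Suc2)
  finally show ?thesis by (simp only: mult.assoc)
qed

lemma adjoint_mult_inverse_mult_gen: "s a * (w * c) = 0"
proof -
  have "0 = a * ((a ^ n * s a + c * s c) * w * c)" using right_inverse annihilates by simp
  also have "\<dots> = a ^ Suc n * (s a * (w * c)) + a * c * (s c * (w * c))"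
    by (simp add: algebra_simps)
  also have "\<dots> = a ^ Suc n * (s a * (w * c))" using annihilates by simp
  finally have "a ^ Suc n * (s a * (w * c)) = 0" by (rule sym)
  then have "a * (s a * (w * c)) = 0" by (rule power_mult_eq_zero_cancel)
  \<comment> \<open>Since \<open>a = a y a\<close> and \<open>y a = a\<^sup>* w a\<^sup>n\<close>, any \<open>h\<close> with \<open>h a a\<^sup>* = 0\<close> has \<open>h a = 0\<close>.\<close>
  moreover have "s (w * c) * a * s a = s (a * (s a * (w * c)))"
    by (simp only: invol_mult invol_invol mult.assoc)
  ultimately have "s (w * c) * a * s a = 0" by simp
  then have "s (w * c) * (a * (s a * w * a ^ (n - 1)) * a) = 0"
    by (simp only: mult.assoc[symmetric] mult_zero_left)
  then have "s (w * c) * a = 0" by (simp only: core_formula_inner)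
  moreover have "s a * (w * c) = s (s (w * c) * a)" by (simp only: invol_mult invol_invol)
  ultimately show ?thesis by simp
qed

lemma core_formula_fixes_adjoint: "s a * w * a ^ n * s a = s a"
proof -
  have "s a = s a * (w * (a ^ n * s a + c * s c))" using left_inverse by simp
  also have "\<dots> = s a * w * a ^ n * s a + s a * (w * c) * s c" by (simp add: algebra_simps)
  also have "\<dots> = s a * w * a ^ n * s a" using adjoint_mult_inverse_mult_gen by simp
  finally show ?thesis by (rule sym)
qed

lemma core_formula_adjoint: "s (s a * w * a ^ (n - 1) * a) = s a * w * a ^ (n - 1) * a"
proof -
  have n: "Suc (n - 1) = n" using n_ge_3 by arith
  define T where "T = s a * w * a ^ n"
  have T: "s a * w * a ^ (n - 1) * a = T"
    unfolding T_def by (simp only: mult.assoc power_Suc2[symmetric] n)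
  have "s T = s a ^ n * s w * a" by (simp only: T_def invol_mult invol_power invol_invol mult.assoc)
  moreover have "T * s a ^ n = s a ^ n"
  proof -
    have "s a ^ n = s a * s a ^ (n - 1)" by (simp only: power_Suc[symmetric] n)
    then show ?thesis by (simp only: T_def mult.assoc[symmetric] core_formula_fixes_adjoint)
  qed
  ultimately have "T * s T = s T" by (simp only: mult.assoc[symmetric])
  then show ?thesis unfolding T by (rule selfadjoint_of_mult_adjoint)
qed

lemma is_dual_core_inverse_core_formula: "is_dual_core_inverse s a (s a * w * a ^ (n - 1))"
  unfolding is_dual_core_inverse_def
  using core_formula_adjoint core_formula_left core_formula_right by blast

end

lemma dual_core_inverse_ring_inv_formula:
  assumes "right_ann a = right_ideal_gen c" and "is_invertible (a ^ n * s a + c * s c)"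
    and "3 \<le> n"
  shows "is_dual_core_inverse s a (s a * ring_inv (a ^ n * s a + c * s c) * a ^ (n - 1))"
proof -
  obtain w where vw: "(a ^ n * s a + c * s c) * w = 1" and wv: "w * (a ^ n * s a + c * s c) = 1"
    using assms(2) unfolding is_invertible_def by blast
  have "a * c = 0" using assms(1) by (rule mult_eq_zero_of_right_ann_eq_right_ideal_gen)
  then have "is_dual_core_inverse s a (s a * w * a ^ (n - 1))"
    using assms(3) vw wv by (rule is_dual_core_inverse_core_formula)
  moreover have "ring_inv (a ^ n * s a + c * s c) = w" using vw wv by (rule ring_inv_eqI)
  ultimately show ?thesis by (simp only:)
qed

end

theorem theorem2p7:
  fixes s :: "'a::ring_1 \<Rightarrow> 'a" and a :: 'a and n :: nat
  assumes "is_involution s" and "n \<ge> 3"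
  shows "(dual_core_invertible s a \<longleftrightarrow>
            (\<exists>c. right_ann a = right_ideal_gen c \<and> is_invertible (a ^ n * s a + c * s c)))
       \<and> (\<forall>c. right_ann a = right_ideal_gen c \<and> is_invertible (a ^ n * s a + c * s c) \<longrightarrow>
            dual_core_inv s a = s a * ring_inv (a ^ n * s a + c * s c) * a ^ (n - 1))"
proof -
  interpret involution s using assms(1) by unfold_locales
  obtain m where n: "n = Suc m" using assms(2) by (cases n) auto
  note core = dual_core_inverse_ring_inv_formula[OF _ _ assms(2)]
  show ?thesis
  proof (intro conjI iffI allI impI)
    assume "dual_core_invertible s a"
    then obtain x where x: "is_dual_core_inverse s a x" unfolding dual_core_invertible_def by blast
    show "\<exists>c. right_ann a = right_ideal_gen c \<and> is_invertible (a ^ n * s a + c * s c)"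
      using right_ann_eq_right_ideal_gen_of_inner_inverse[OF dual_core_inverseD(4)[OF x]]
        dual_core_inverse_imp_invertible[OF x, of m] unfolding n by blast
  next
    assume "\<exists>c. right_ann a = right_ideal_gen c \<and> is_invertible (a ^ n * s a + c * s c)"
    then show "dual_core_invertible s a" unfolding dual_core_invertible_def using core by blast
  next
    fix c assume "right_ann a = right_ideal_gen c \<and> is_invertible (a ^ n * s a + c * s c)"
    then show "dual_core_inv s a = s a * ring_inv (a ^ n * s a + c * s c) * a ^ (n - 1)"
      using core dual_core_inv_eq by blast
  qed
qed

end
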